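(* Let $0<\gamma<1$ and integers $n\ge p\ge2$. Then $$\|B_\gamma^{(p)}\|_F^2\le n+\frac{n}{\Gamma(1-\gamma)^2}H_{p-1}^{(2\gamma)}+\frac{(n-p)(n-p+1)}{2\,\Gamma(1-\gamma)^2}\cdot\frac{1}{(p-1)^{2\gamma}},$$ where $H_m^{(s)}:=\sum_{r=1}^m r^{-s}$. Moreover there is an absolute constant $K$ (independent of $n,p,\gamma$) such that $$\frac{\|B_\gamma^{(p)}\|_F}{\sqrt n}\le\begin{cases}K\,p^{-\gamma}\left(\sqrt{\frac{p}{1/2-\gamma}}+\sqrt n\right), & 0<\gamma<\tfrac12,\\[2pt] K\left(\sqrt{\log p}+\sqrt{n/p}\right), & \gamma=\tfrac12,\\[2pt] K\left(\frac{1}{\sqrt{\gamma-1/2}}+(1-\gamma)\sqrt n\,p^{-\gamma}\right), & \tfrac12<\gamma<1.\end{cases}$$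
   Context: $\log$ is the natural logarithm and $\Gamma$ the Gamma function. $E\in\mathbb{R}^{n\times n}$ is the lower-triangular all-ones (prefix-sum) matrix. $(\tilde c_\gamma)_i:=(-1)^i\binom{\gamma}{i}$ with $\binom{\gamma}{i}=\prod_{j=1}^{i}\frac{\gamma+1-j}{j}$. $(C_\gamma^{(p)})^{-1}$ is the $n\times n$ lower-triangular Toeplitz matrix whose $r$-th subdiagonal ($r=0$ the main diagonal) equals $(\tilde c_\gamma)_r$ for $r\le p-1$ and $0$ for $r\ge p$, and $B_\gamma^{(p)}:=E\,(C_\gamma^{(p)})^{-1}$. *)

theory Defs
  imports "HOL-Analysis.Analysis"
begin

text \<open>Matrices are n x n with indices 0..n-1, represented as nat => nat => real.\<close>

definition ctilde :: "real \<Rightarrow> nat \<Rightarrow> real" where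
  "ctilde \<gamma> i = (-1) ^ i * (\<gamma> gchoose i)"

definition Emat :: "nat \<Rightarrow> nat \<Rightarrow> real" where
  "Emat i j = (if j \<le> i then 1 else 0)"

text \<open>(C_gamma^(p))^{-1}: banded lower-triangular Toeplitz matrix.\<close>
definition Cinv :: "real \<Rightarrow> nat \<Rightarrow> nat \<Rightarrow> nat \<Rightarrow> real" where
  "Cinv \<gamma> p i j = (if j \<le> i \<and> i - j \<le> p - 1 then ctilde \<gamma> (i - j) else 0)"

definition Bmat :: "real \<Rightarrow> nat \<Rightarrow> nat \<Rightarrow> nat \<Rightarrow> nat \<Rightarrow> real" where
  "Bmat \<gamma> p n i j = (\<Sum>k<n. Emat i k * Cinv \<gamma> p k j)"

definition frob_norm :: "nat \<Rightarrow> (nat \<Rightarrow> nat \<Rightarrow> real) \<Rightarrow> real" where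
  "frob_norm n A = sqrt (\<Sum>i<n. \<Sum>j<n. (A i j)\<^sup>2)"

definition genharm :: "nat \<Rightarrow> real \<Rightarrow> real" where
  "genharm m s = (\<Sum>r=1..m. 1 / (real r powr s))"

end

(*
  Summing column j of the banded matrix C^-1 down to row i gives the partial sum
  a_d = c~_0 + ... + c~_d with d = min(i - j, p - 1), so B is lower triangular Toeplitz and
  ||B||_F^2 = sum_{i<n} sum_{d<=i} a_min(d,p-1)^2.  The partial sums are
  a_d = binom(d - gamma, d) = Gamma(d + 1 - gamma) / (d! Gamma(1 - gamma)) = prod_{j=1..d} (1 - gamma/j).

  Log-convexity of Gamma gives Gamma(d + 1 - gamma) <= d^(1 - gamma) Gamma(d), i.e.
  a_d <= d^-gamma / Gamma(1 - gamma); bounding the first p - 1 entries of each row by this and the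
  remaining ones by the value at d = p - 1 gives the first estimate.  For the second, 1 - t <= e^-t and
  H_d >= ln(d + 1) give a_d <= e (1 - gamma) (d + 1)^-gamma, hence
  ||B||_F^2 <= 9 n (H_p^(2 gamma) + (1 - gamma)^2 n p^(-2 gamma)), and comparing H_p^(2 gamma) with the
  integral of x^(-2 gamma) yields the three regimes, with K = 6.
*)

theory Submission
  imports Defs
begin

definition ctilde_sum :: "real \<Rightarrow> nat \<Rightarrow> real" where
  "ctilde_sum \<gamma> m = (\<Sum>i\<le>m. ctilde \<gamma> i)"

lemma ctilde_0 [simp]: "ctilde \<gamma> 0 = 1"
  by (simp add: ctilde_def)

lemma ctilde_sum_0 [simp]: "ctilde_sum \<gamma> 0 = 1"
  by (simp add: ctilde_sum_def)

lemma ctilde_sum_Suc: "ctilde_sum \<gamma> (Suc m) = ctilde_sum \<gamma> m + ctilde \<gamma> (Suc m)"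
  by (simp add: ctilde_sum_def)

lemma ctilde_sum_eq_gchoose: "ctilde_sum \<gamma> m = (real m - \<gamma>) gchoose m"
proof -
  have "ctilde_sum \<gamma> m = (-1) ^ m * ((\<gamma> - 1) gchoose m)"
    unfolding ctilde_sum_def ctilde_def
    using gbinomial_sum_lower_neg[of \<gamma> m] by (simp add: mult.commute)
  also have "\<dots> = (real m - \<gamma>) gchoose m"
    by (subst gbinomial_negated_upper) simp
  finally show ?thesis .
qed

lemma ctilde_sum_Suc_mult: "ctilde_sum \<gamma> (Suc m) = ctilde_sum \<gamma> m * (1 - \<gamma> / real (Suc m))"
proof -
  have "ctilde_sum \<gamma> (Suc m) = ((real m - \<gamma>) + 1) gchoose Suc m"
    by (simp add: ctilde_sum_eq_gchoose algebra_simps)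
  also have "\<dots> = ctilde_sum \<gamma> m * ((real m - \<gamma> + 1) / real (Suc m))"
    by (simp only: gbinomial_rec ctilde_sum_eq_gchoose)
  also have "\<dots> = ctilde_sum \<gamma> m * (1 - \<gamma> / real (Suc m))"
    by (simp add: field_simps)
  finally show ?thesis .
qed

lemma ctilde_sum_Gamma:
  assumes "\<gamma> < 1"
  shows "ctilde_sum \<gamma> m = Gamma (real m + 1 - \<gamma>) / (fact m * Gamma (1 - \<gamma>))"
proof -
  have "real m - \<gamma> + 1 \<notin> \<int>\<^sub>\<le>\<^sub>0"
    using assms by (auto elim!: nonpos_Ints_cases)
  then show ?thesis
    unfolding ctilde_sum_eq_gchoose by (subst gbinomial_Gamma) (simp_all add: algebra_simps)
qed

lemma ctilde_sum_pos: "\<gamma> < 1 \<Longrightarrow> 0 < ctilde_sum \<gamma> m"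
  by (simp add: ctilde_sum_Gamma)

lemma sum_Cinv_column:
  "(\<Sum>k\<le>i. Cinv \<gamma> p k j) = (if j \<le> i then ctilde_sum \<gamma> (min (i - j) (p - 1)) else 0)"
proof (induction i)
  case 0
  then show ?case by (simp add: Cinv_def)
next
  case (Suc i)
  show ?case
  proof (cases "j \<le> i")
    case True
    then show ?thesis using Suc
      by (auto simp: Cinv_def Suc_diff_le ctilde_sum_Suc min_def) (metis le_antisym not_less_eq_eq)
  next
    case False
    then show ?thesis using Suc by (auto simp: Cinv_def not_le le_Suc_eq)
  qed
qed

lemma Bmat_eq:
  assumes "i < n"
  shows "Bmat \<gamma> p n i j = (if j \<le> i then ctilde_sum \<gamma> (min (i - j) (p - 1)) else 0)"
proof -
  have "Bmat \<gamma> p n i j = (\<Sum>k\<in>{..<n} \<inter> {k. k \<le> i}. Cinv \<gamma> p k j)"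
    unfolding Bmat_def Emat_def by (auto simp: sum.inter_restrict intro!: sum.cong)
  also have "{..<n} \<inter> {k. k \<le> i} = {..i}" using assms by auto
  finally show ?thesis by (simp add: sum_Cinv_column)
qed

lemma frob_norm_Bmat_sq:
  "(frob_norm n (Bmat \<gamma> p n))\<^sup>2 = (\<Sum>i<n. \<Sum>d\<le>i. (ctilde_sum \<gamma> (min d (p - 1)))\<^sup>2)"
proof -
  have row: "(\<Sum>j<n. (Bmat \<gamma> p n i j)\<^sup>2) = (\<Sum>d\<le>i. (ctilde_sum \<gamma> (min d (p - 1)))\<^sup>2)"
    if i: "i < n" for i
  proof -
    have "(\<Sum>j<n. (Bmat \<gamma> p n i j)\<^sup>2)
        = (\<Sum>j\<in>{..<n} \<inter> {j. j \<le> i}. (ctilde_sum \<gamma> (min (i - j) (p - 1)))\<^sup>2)"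
      using i by (auto simp: Bmat_eq sum.inter_restrict intro!: sum.cong)
    also have "{..<n} \<inter> {j. j \<le> i} = {..<Suc i}" using i by auto
    also have "(\<Sum>j<Suc i. (ctilde_sum \<gamma> (min (i - j) (p - 1)))\<^sup>2)
        = (\<Sum>d<Suc i. (ctilde_sum \<gamma> (min d (p - 1)))\<^sup>2)"
      by (subst sum.nat_diff_reindex[symmetric]) (intro sum.cong refl, auto)
    finally show ?thesis by (simp add: lessThan_Suc_atMost)
  qed
  show ?thesis
    unfolding frob_norm_def by (simp add: sum_nonneg row)
qed

lemma sum_atMost_le_truncated:
  fixes c h :: "nat \<Rightarrow> real"
  assumes "c 0 \<le> 1"
    and "\<And>d. 1 \<le> d \<Longrightarrow> d \<le> q \<Longrightarrow> c d \<le> h d"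
    and "\<And>d. q \<le> d \<Longrightarrow> c d \<le> h q"
  shows "(\<Sum>d\<le>i. c d) \<le> 1 + (\<Sum>d=1..min i q. h d) + real (i - q) * h q"
proof (induction i)
  case 0
  then show ?case using assms(1) by simp
next
  case (Suc i)
  show ?case
  proof (cases "Suc i \<le> q")
    case True
    then have "min (Suc i) q = Suc (min i q)" "i - q = 0" "Suc i - q = 0" by auto
    then show ?thesis using Suc assms(2)[of "Suc i"] True by simp
  next
    case False
    then have "min (Suc i) q = min i q" "real (Suc i - q) = real (i - q) + 1"
      by auto
    then show ?thesis using Suc assms(3)[of "Suc i"] False by (simp add: algebra_simps)
  qed
qed

lemma sum_lessThan_diff_pred:
  assumes "1 \<le> p"
  shows "(\<Sum>i<n. real (i - (p - 1))) = real ((n - p) * (n - p + 1)) / 2"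
proof (induction n)
  case 0
  then show ?case by simp
next
  case (Suc n)
  show ?case
  proof (cases "p \<le> n")
    case True
    then obtain t where "n = p + t" using le_Suc_ex by blast
    then have "n - (p - 1) = t + 1" "Suc n - p = t + 1" "n - p = t" using assms by auto
    then show ?thesis using Suc by (simp add: field_simps)
  next
    case False
    then have "n - (p - 1) = 0" "Suc n - p = 0" "n - p = 0" by auto
    then show ?thesis using Suc by simp
  qed
qed

lemma sum_prefix_sums_le_truncated:
  fixes c h :: "nat \<Rightarrow> real"
  assumes "1 \<le> p" and "c 0 \<le> 1"
    and "\<And>d. 1 \<le> d \<Longrightarrow> d \<le> p - 1 \<Longrightarrow> c d \<le> h d"
    and "\<And>d. p - 1 \<le> d \<Longrightarrow> c d \<le> h (p - 1)"
    and "\<And>d. 0 \<le> h d"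
  shows "(\<Sum>i<n. \<Sum>d\<le>i. c d) \<le> real n + real n * (\<Sum>d=1..p - 1. h d)
           + real ((n - p) * (n - p + 1)) / 2 * h (p - 1)"
proof -
  have "(\<Sum>i<n. \<Sum>d\<le>i. c d)
      \<le> (\<Sum>i<n. 1 + (\<Sum>d=1..p - 1. h d) + real (i - (p - 1)) * h (p - 1))"
  proof (intro sum_mono)
    fix i
    have "(\<Sum>d=1..min i (p - 1). h d) \<le> (\<Sum>d=1..p - 1. h d)"
      by (intro sum_mono2) (auto intro: assms(5))
    then show "(\<Sum>d\<le>i. c d) \<le> 1 + (\<Sum>d=1..p - 1. h d) + real (i - (p - 1)) * h (p - 1)"
      using sum_atMost_le_truncated[of c "p - 1" h i] assms(2-4) by fastforce
  qed
  also have "\<dots> = real n + real n * (\<Sum>d=1..p - 1. h d)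
      + (\<Sum>i<n. real (i - (p - 1))) * h (p - 1)"
    by (simp add: sum.distrib sum_distrib_right distrib_left)
  also have "\<dots> = real n + real n * (\<Sum>d=1..p - 1. h d)
      + real ((n - p) * (n - p + 1)) / 2 * h (p - 1)"
    by (simp only: sum_lessThan_diff_pred[OF assms(1)])
  finally show ?thesis .
qed

lemma Gamma_add_le_powr:
  fixes x a :: real
  assumes "0 < x" "0 \<le> a" "a \<le> 1"
  shows "Gamma (x + a) \<le> x powr a * Gamma x"
proof -
  have Gamma_Suc: "Gamma (x + 1) = x * Gamma x"
    using assms by (intro Gamma_plus1) auto
  have "ln (Gamma ((1 - a) *\<^sub>R x + a *\<^sub>R (x + 1)))
      \<le> (1 - a) * ln (Gamma x) + a * ln (Gamma (x + 1))"
    using convex_onD[OF log_convex_Gamma_real, of a x "x + 1"] assms by simp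
  also have "\<dots> = ln (x powr a * Gamma x)"
    using assms unfolding Gamma_Suc by (simp add: ln_mult ln_powr algebra_simps)
  finally have "ln (Gamma (x + a)) \<le> ln (x powr a * Gamma x)"
    by (simp add: algebra_simps)
  then show ?thesis
    using assms by simp
qed

lemma ctilde_sum_le_Gamma:
  assumes "0 < \<gamma>" "\<gamma> < 1" "1 \<le> d"
  shows "ctilde_sum \<gamma> d \<le> real d powr (-\<gamma>) / Gamma (1 - \<gamma>)"
proof -
  have "fact d = Gamma (1 + real d)"
    by (rule Gamma_fact[symmetric])
  also have "\<dots> = real d * Gamma (real d)"
    using assms by (subst add.commute, intro Gamma_plus1) auto
  finally have fact_eq: "fact d = real d * Gamma (real d)" .
  have "Gamma (real d + 1 - \<gamma>) \<le> real d powr (1 - \<gamma>) * Gamma (real d)"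
    using Gamma_add_le_powr[of "real d" "1 - \<gamma>"] assms by (simp add: algebra_simps)
  also have "\<dots> = real d powr (-\<gamma>) * fact d"
    using assms by (simp add: fact_eq powr_diff powr_minus field_simps)
  finally show ?thesis
    using assms by (simp add: ctilde_sum_Gamma field_simps)
qed

lemma frob_norm_Bmat_sq_le_Gamma:
  assumes "0 < \<gamma>" "\<gamma> < 1" "2 \<le> p" "p \<le> n"
  shows "(frob_norm n (Bmat \<gamma> p n))\<^sup>2
           \<le> real n + real n / (Gamma (1 - \<gamma>))\<^sup>2 * genharm (p - 1) (2 * \<gamma>)
             + real ((n - p) * (n - p + 1)) / (2 * (Gamma (1 - \<gamma>))\<^sup>2)
               * (1 / (real (p - 1) powr (2 * \<gamma>)))"
proof -
  define h where "h d = 1 / (Gamma (1 - \<gamma>))\<^sup>2 * (1 / real d powr (2 * \<gamma>))" for d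
  have sq: "(ctilde_sum \<gamma> d)\<^sup>2 \<le> h d" if "1 \<le> d" for d
  proof -
    have "(ctilde_sum \<gamma> d)\<^sup>2 \<le> (real d powr (-\<gamma>) / Gamma (1 - \<gamma>))\<^sup>2"
      using ctilde_sum_le_Gamma[of \<gamma> d] ctilde_sum_pos[of \<gamma> d] assms that
      by (intro power_mono) auto
    also have "\<dots> = h d"
      by (simp add: h_def power_divide powr_minus_divide power2_eq_square powr_add[symmetric])
    finally show ?thesis .
  qed
  have h_nonneg: "0 \<le> h d" for d
    by (simp add: h_def)
  have "(frob_norm n (Bmat \<gamma> p n))\<^sup>2 \<le> real n + real n * (\<Sum>d=1..p - 1. h d)
           + real ((n - p) * (n - p + 1)) / 2 * h (p - 1)"
    unfolding frob_norm_Bmat_sq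
    using assms(3) by (intro sum_prefix_sums_le_truncated) (auto simp: sq min_def h_nonneg)
  also have "\<dots> = real n + real n / (Gamma (1 - \<gamma>))\<^sup>2 * genharm (p - 1) (2 * \<gamma>)
                + real ((n - p) * (n - p + 1)) / (2 * (Gamma (1 - \<gamma>))\<^sup>2)
                  * (1 / (real (p - 1) powr (2 * \<gamma>)))"
    unfolding h_def genharm_def by (simp add: sum_distrib_left field_simps)
  finally show ?thesis .
qed

lemma ctilde_sum_le_exp_harm:
  assumes "0 \<le> \<gamma>" "\<gamma> < 1" "1 \<le> d"
  shows "ctilde_sum \<gamma> d \<le> (1 - \<gamma>) * exp \<gamma> * exp (- \<gamma> * harm d)"
  using assms(3)
proof (induction d rule: dec_induct)
  case base
  then show ?case
    by (simp add: ctilde_sum_Suc_mult harm_def exp_minus field_simps)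
next
  case (step m)
  have factor: "0 \<le> 1 - \<gamma> / real (Suc m)"
    "1 - \<gamma> / real (Suc m) \<le> exp (- \<gamma> / real (Suc m))"
    using assms exp_ge_add_one_self[of "- \<gamma> / real (Suc m)"] by (auto simp: field_simps)
  have "ctilde_sum \<gamma> (Suc m) = ctilde_sum \<gamma> m * (1 - \<gamma> / real (Suc m))"
    by (rule ctilde_sum_Suc_mult)
  also have "\<dots> \<le> ((1 - \<gamma>) * exp \<gamma> * exp (- \<gamma> * harm m)) * exp (- \<gamma> / real (Suc m))"
    using step.IH factor ctilde_sum_pos[of \<gamma> m] assms by (intro mult_mono) auto
  also have "\<dots> = (1 - \<gamma>) * exp \<gamma> * exp (- \<gamma> * harm (Suc m))"
    by (simp add: harm_Suc algebra_simps exp_add[symmetric] divide_inverse)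
  finally show ?case .
qed

lemma ctilde_sum_le_powr:
  assumes "0 \<le> \<gamma>" "\<gamma> < 1" "1 \<le> d"
  shows "ctilde_sum \<gamma> d \<le> exp 1 * (1 - \<gamma>) * real (d + 1) powr (-\<gamma>)"
proof -
  have "exp (- \<gamma> * harm d) \<le> exp (- \<gamma> * ln (real d + 1))"
    using ln_le_harm[of d] assms(1) by (simp add: mult_left_mono)
  also have "\<dots> = real (d + 1) powr (-\<gamma>)"
    by (simp add: powr_def add.commute)
  finally have "exp \<gamma> * exp (- \<gamma> * harm d) \<le> exp 1 * real (d + 1) powr (-\<gamma>)"
    using assms by (intro mult_mono) auto
  then have "(1 - \<gamma>) * (exp \<gamma> * exp (- \<gamma> * harm d))
      \<le> (1 - \<gamma>) * (exp 1 * real (d + 1) powr (-\<gamma>))"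
    using assms by (intro mult_left_mono) auto
  then show ?thesis
    using ctilde_sum_le_exp_harm[OF assms] by (simp add: algebra_simps)
qed

lemma ctilde_sum_sq_le_powr:
  assumes "0 \<le> \<gamma>" "\<gamma> < 1" "1 \<le> d"
  shows "(ctilde_sum \<gamma> d)\<^sup>2 \<le> 9 * (1 - \<gamma>)\<^sup>2 * real (d + 1) powr (- (2 * \<gamma>))"
proof -
  have "(ctilde_sum \<gamma> d)\<^sup>2 \<le> (exp 1 * (1 - \<gamma>) * real (d + 1) powr (-\<gamma>))\<^sup>2"
    using ctilde_sum_le_powr[OF assms] less_imp_le[OF ctilde_sum_pos[OF assms(2)]]
    by (intro power_mono)
  also have "\<dots> = (exp 1)\<^sup>2 * ((1 - \<gamma>)\<^sup>2 * real (d + 1) powr (- (2 * \<gamma>)))"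
    by (simp add: power_mult_distrib power2_eq_square powr_add[symmetric])
  also have "\<dots> \<le> 9 * ((1 - \<gamma>)\<^sup>2 * real (d + 1) powr (- (2 * \<gamma>)))"
    using power_mono[OF exp_le, of 2] by (intro mult_right_mono) auto
  finally show ?thesis by simp
qed

lemma genharm_eq_sum_powr: "genharm m s = (\<Sum>k=1..m. real k powr (-s))"
  by (simp add: genharm_def powr_minus_divide)

lemma sum_powr_shift:
  assumes "1 \<le> p"
  shows "(\<Sum>d=1..p - 1. real (d + 1) powr s) = (\<Sum>k=1..p. real k powr s) - 1"
proof -
  have "(\<Sum>d=1..p - 1. real (d + 1) powr s) = (\<Sum>k=Suc 1..Suc (p - 1). real k powr s)"
    unfolding sum.shift_bounds_cl_Suc_ivl by simp
  also have "\<dots> = (\<Sum>k=1..p. real k powr s) - 1"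
    using assms by (subst (2) sum.atLeast_Suc_atMost) auto
  finally show ?thesis .
qed

lemma frob_norm_Bmat_sq_le_genharm:
  assumes "0 < \<gamma>" "\<gamma> < 1" "2 \<le> p" "p \<le> n"
  shows "(frob_norm n (Bmat \<gamma> p n))\<^sup>2
           \<le> 9 * real n * (genharm p (2 * \<gamma>) + (1 - \<gamma>)\<^sup>2 * real n * real p powr (- (2 * \<gamma>)))"
proof -
  define G where "G = genharm p (2 * \<gamma>)"
  define h where "h d = 9 * (1 - \<gamma>)\<^sup>2 * real (d + 1) powr (- (2 * \<gamma>))" for d
  have sq: "(ctilde_sum \<gamma> d)\<^sup>2 \<le> h d" if "1 \<le> d" for d
    unfolding h_def using ctilde_sum_sq_le_powr[of \<gamma> d] assms that by simp
  have h_nonneg: "0 \<le> h d" for d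
    by (simp add: h_def)
  have "(\<Sum>d=1..p - 1. h d) \<le> (\<Sum>d=1..p - 1. 9 * real (d + 1) powr (- (2 * \<gamma>)))"
    unfolding h_def using assms by (intro sum_mono mult_right_mono) (auto simp: power_le_one)
  also have "\<dots> = 9 * (G - 1)"
    using assms sum_powr_shift[of p "- (2 * \<gamma>)"]
    by (simp add: G_def genharm_eq_sum_powr flip: sum_distrib_left)
  finally have "real n * (\<Sum>d=1..p - 1. h d) \<le> real n * (9 * (G - 1))"
    by (intro mult_left_mono) auto
  moreover have "real ((n - p) * (n - p + 1)) / 2 * h (p - 1)
      \<le> (real n * real n) * (9 * (1 - \<gamma>)\<^sup>2 * real p powr (- (2 * \<gamma>)))"
  proof (rule mult_mono)
    have "(n - p) * (n - p + 1) \<le> n * n"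
      using assms by (intro mult_mono) auto
    then have "real ((n - p) * (n - p + 1)) \<le> real n * real n"
      by (metis of_nat_le_iff of_nat_mult)
    then show "real ((n - p) * (n - p + 1)) / 2 \<le> real n * real n"
      by linarith
  qed (use assms h_nonneg in \<open>auto simp: h_def\<close>)
  moreover have "(frob_norm n (Bmat \<gamma> p n))\<^sup>2 \<le> real n + real n * (\<Sum>d=1..p - 1. h d)
      + real ((n - p) * (n - p + 1)) / 2 * h (p - 1)"
    unfolding frob_norm_Bmat_sq using assms(3)
    by (intro sum_prefix_sums_le_truncated) (auto simp: sq min_def h_nonneg)
  moreover have "9 * real n * (G + (1 - \<gamma>)\<^sup>2 * real n * real p powr (- (2 * \<gamma>)))
      = 9 * real n + real n * (9 * (G - 1))
        + (real n * real n) * (9 * (1 - \<gamma>)\<^sup>2 * real p powr (- (2 * \<gamma>)))"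
    by (simp add: algebra_simps)
  ultimately show ?thesis
    unfolding G_def[symmetric] by linarith
qed

lemma frob_norm_Bmat_div_sqrt_le:
  assumes "0 < \<gamma>" "\<gamma> < 1" "2 \<le> p" "p \<le> n"
  shows "frob_norm n (Bmat \<gamma> p n) / sqrt (real n)
           \<le> 3 * (sqrt (genharm p (2 * \<gamma>)) + (1 - \<gamma>) * sqrt (real n) * real p powr (-\<gamma>))"
proof -
  define G where "G = genharm p (2 * \<gamma>)"
  define X where "X = (1 - \<gamma>) * sqrt (real n) * real p powr (-\<gamma>)"
  have n_pos: "0 < real n" using assms by simp
  have "G \<ge> 0" "X \<ge> 0"
    using assms by (auto simp: G_def X_def genharm_def intro: sum_nonneg)
  have "(real p powr (-\<gamma>))\<^sup>2 = real p powr (- (2 * \<gamma>))"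
    using assms by (simp add: powr_power)
  then have "X\<^sup>2 = (1 - \<gamma>)\<^sup>2 * real n * real p powr (- (2 * \<gamma>))"
    by (simp add: X_def power_mult_distrib)
  then have "frob_norm n (Bmat \<gamma> p n) \<le> sqrt (real n * (9 * (G + X\<^sup>2)))"
    using frob_norm_Bmat_sq_le_genharm[OF assms]
    by (intro real_le_rsqrt) (simp add: G_def algebra_simps)
  also have "\<dots> = sqrt (real n) * (3 * sqrt (G + X\<^sup>2))"
    using real_sqrt_unique[of 3 9] by (simp only: real_sqrt_mult) simp
  also have "\<dots> \<le> sqrt (real n) * (3 * (sqrt G + X))"
    using sqrt_add_le_add_sqrt[of G "X\<^sup>2"] \<open>G \<ge> 0\<close> \<open>X \<ge> 0\<close>
    by (intro mult_left_mono) auto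
  finally show ?thesis
    using n_pos by (simp add: G_def X_def field_simps)
qed

lemma sum_le_antiderivative:
  fixes f F :: "real \<Rightarrow> real"
  assumes deriv: "\<And>x. 1 \<le> x \<Longrightarrow> (F has_real_derivative f x) (at x)"
    and antimono: "\<And>x y. 1 \<le> x \<Longrightarrow> x \<le> y \<Longrightarrow> f y \<le> f x"
    and "1 \<le> m"
  shows "(\<Sum>k=1..m. f (real k)) \<le> f 1 + F (real m) - F 1"
  using assms(3)
proof (induction m rule: dec_induct)
  case base
  then show ?case by simp
next
  case (step m)
  obtain z where z: "real m < z" "z < real (Suc m)"
    and mvt: "F (real (Suc m)) - F (real m) = (real (Suc m) - real m) * f z"
    using MVT2[of "real m" "real (Suc m)" F f] deriv step.hyps by force
  have "f (real (Suc m)) \<le> F (real (Suc m)) - F (real m)"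
    using antimono[of z "real (Suc m)"] z mvt step.hyps by simp
  then show ?case
    using step.IH by simp
qed

lemma genharm_le_small_exponent:
  assumes "0 \<le> s" "s < 1" "1 \<le> m"
  shows "genharm m s \<le> real m powr (1 - s) / (1 - s)"
proof -
  have "genharm m s \<le> 1 powr (-s) + real m powr (1 - s) / (1 - s) - 1 powr (1 - s) / (1 - s)"
    unfolding genharm_eq_sum_powr
  proof (rule sum_le_antiderivative[where F = "\<lambda>x. x powr (1 - s) / (1 - s)"])
    fix x :: real assume "1 \<le> x"
    then show "((\<lambda>x. x powr (1 - s) / (1 - s)) has_real_derivative x powr (-s)) (at x)"
      using assms by (auto intro!: derivative_eq_intros)
  qed (use assms in \<open>auto intro: powr_mono2'\<close>)
  moreover have "1 \<le> 1 / (1 - s)"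
    using assms by (simp add: field_simps)
  ultimately show ?thesis by simp
qed

lemma genharm_one_le:
  assumes "1 \<le> m"
  shows "genharm m 1 \<le> 1 + ln (real m)"
proof -
  have "genharm m 1 \<le> 1 powr (-1) + ln (real m) - ln 1"
    unfolding genharm_eq_sum_powr
  proof (rule sum_le_antiderivative[where F = ln])
    fix x :: real assume "1 \<le> x"
    then show "(ln has_real_derivative x powr (-1)) (at x)"
      by (auto intro!: derivative_eq_intros simp: powr_minus_divide)
  qed (use assms in \<open>auto simp: frac_le\<close>)
  then show ?thesis by simp
qed

lemma genharm_le_large_exponent:
  assumes "1 < s" "1 \<le> m"
  shows "genharm m s \<le> s / (s - 1)"
proof -
  have "genharm m s
      \<le> 1 powr (-s) + (- (real m powr (1 - s) / (s - 1))) - (- (1 powr (1 - s) / (s - 1)))"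
    unfolding genharm_eq_sum_powr
  proof (rule sum_le_antiderivative[where F = "\<lambda>x. - (x powr (1 - s) / (s - 1))"])
    fix x :: real assume "1 \<le> x"
    then have "((\<lambda>x. - (x powr (1 - s) / (s - 1)))
        has_real_derivative - ((1 - s) * x powr (1 - s - 1) / (s - 1))) (at x)"
      by (intro DERIV_minus DERIV_cdivide has_real_derivative_powr) auto
    moreover have "- ((1 - s) * x powr (1 - s - 1) / (s - 1)) = x powr (-s)"
      using assms by (simp add: field_simps)
    ultimately show "((\<lambda>x. - (x powr (1 - s) / (s - 1))) has_real_derivative x powr (-s)) (at x)"
      by simp
  qed (use assms in \<open>auto intro: powr_mono2'\<close>)
  moreover have "0 \<le> real m powr (1 - s) / (s - 1)"
    using assms by simp
  moreover have "1 + 1 / (s - 1) = s / (s - 1)"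
    using assms by (simp add: field_simps)
  ultimately show ?thesis by simp
qed

lemma frob_norm_Bmat_div_sqrt_le_below_half:
  assumes "0 < \<gamma>" "\<gamma> < 1/2" "2 \<le> p" "p \<le> n"
  shows "frob_norm n (Bmat \<gamma> p n) / sqrt (real n)
           \<le> 6 * real p powr (-\<gamma>) * (sqrt (real p / (1/2 - \<gamma>)) + sqrt (real n))"
proof -
  have bound: "frob_norm n (Bmat \<gamma> p n) / sqrt (real n)
      \<le> 3 * (sqrt (genharm p (2 * \<gamma>)) + (1 - \<gamma>) * sqrt (real n) * real p powr (-\<gamma>))"
    using assms by (intro frob_norm_Bmat_div_sqrt_le) auto
  have p_pow: "real p powr (1 - 2 * \<gamma>) = (real p powr (-\<gamma>))\<^sup>2 * real p"
  proof -
    have "(real p powr (-\<gamma>))\<^sup>2 * real p = real p powr (- (2 * \<gamma>)) * real p powr 1"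
      using assms by (simp add: powr_power)
    also have "\<dots> = real p powr (1 - 2 * \<gamma>)"
      by (subst powr_add[symmetric]) simp
    finally show ?thesis ..
  qed
  have "genharm p (2 * \<gamma>) \<le> real p powr (1 - 2 * \<gamma>) * (1 / (1 - 2 * \<gamma>))"
    using genharm_le_small_exponent[of "2 * \<gamma>" p] assms by simp
  also have "\<dots> \<le> (real p powr (-\<gamma>))\<^sup>2 * real p * (1 / (1/2 - \<gamma>))"
    unfolding p_pow using assms by (intro mult_left_mono) (auto simp: field_simps)
  finally have "sqrt (genharm p (2 * \<gamma>))
      \<le> sqrt ((real p powr (-\<gamma>))\<^sup>2 * (real p / (1/2 - \<gamma>)))"
    by (intro real_sqrt_le_mono) simp
  also have "\<dots> = real p powr (-\<gamma>) * sqrt (real p / (1/2 - \<gamma>))"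
    by (simp only: real_sqrt_mult real_sqrt_abs) simp
  finally have sum_bound:
    "sqrt (genharm p (2 * \<gamma>)) \<le> real p powr (-\<gamma>) * sqrt (real p / (1/2 - \<gamma>))" .
  have "(1 - \<gamma>) * sqrt (real n) * real p powr (-\<gamma>) \<le> real p powr (-\<gamma>) * sqrt (real n)"
    using assms by (simp add: mult_right_le_one_le mult.commute)
  with sum_bound
  have "3 * (sqrt (genharm p (2 * \<gamma>)) + (1 - \<gamma>) * sqrt (real n) * real p powr (-\<gamma>))
      \<le> 3 * (real p powr (-\<gamma>) * sqrt (real p / (1/2 - \<gamma>)) + real p powr (-\<gamma>) * sqrt (real n))"
    by simp
  with bound have "frob_norm n (Bmat \<gamma> p n) / sqrt (real n)
      \<le> 3 * (real p powr (-\<gamma>) * sqrt (real p / (1/2 - \<gamma>)) + real p powr (-\<gamma>) * sqrt (real n))"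
    by (rule order.trans)
  also have "\<dots> \<le> 6 * real p powr (-\<gamma>) * (sqrt (real p / (1/2 - \<gamma>)) + sqrt (real n))"
    using assms by (simp add: algebra_simps)
  finally show ?thesis .
qed

lemma frob_norm_Bmat_div_sqrt_le_at_half:
  assumes "2 \<le> p" "p \<le> n"
  shows "frob_norm n (Bmat (1/2) p n) / sqrt (real n)
           \<le> 6 * (sqrt (ln (real p)) + sqrt (real n / real p))"
proof -
  have bound: "frob_norm n (Bmat (1/2) p n) / sqrt (real n)
      \<le> 3 * (sqrt (genharm p 1) + 1/2 * sqrt (real n) * real p powr (- (1/2)))"
    using assms frob_norm_Bmat_div_sqrt_le[of "1/2" p n] by simp
  have "ln 2 \<le> ln (real p)"
    using assms by simp
  then have "1 / 2 \<le> ln (real p)"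
    using ln2_ge_two_thirds by linarith
  then have "genharm p 1 \<le> 4 * ln (real p)"
    using genharm_one_le[of p] assms by simp
  then have "sqrt (genharm p 1) \<le> sqrt 4 * sqrt (ln (real p))"
    by (metis real_sqrt_le_mono real_sqrt_mult)
  also have "sqrt 4 = (2::real)"
    by (simp add: real_sqrt_unique)
  finally have sum_bound: "sqrt (genharm p 1) \<le> 2 * sqrt (ln (real p))" .
  have "sqrt (real n) * real p powr (- (1/2)) = sqrt (real n / real p)"
    using assms by (simp add: powr_minus_divide powr_half_sqrt real_sqrt_divide)
  with bound sum_bound have "frob_norm n (Bmat (1/2) p n) / sqrt (real n)
      \<le> 3 * (2 * sqrt (ln (real p)) + 1/2 * sqrt (real n / real p))"
    by simp
  also have "\<dots> \<le> 6 * (sqrt (ln (real p)) + sqrt (real n / real p))"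
    by simp
  finally show ?thesis .
qed

lemma frob_norm_Bmat_div_sqrt_le_above_half:
  assumes "1/2 < \<gamma>" "\<gamma> < 1" "2 \<le> p" "p \<le> n"
  shows "frob_norm n (Bmat \<gamma> p n) / sqrt (real n)
           \<le> 6 * (1 / sqrt (\<gamma> - 1/2) + (1 - \<gamma>) * sqrt (real n) * real p powr (-\<gamma>))"
proof -
  have bound: "frob_norm n (Bmat \<gamma> p n) / sqrt (real n)
      \<le> 3 * (sqrt (genharm p (2 * \<gamma>)) + (1 - \<gamma>) * sqrt (real n) * real p powr (-\<gamma>))"
    using assms by (intro frob_norm_Bmat_div_sqrt_le) auto
  have "genharm p (2 * \<gamma>) \<le> 2 * \<gamma> / (2 * \<gamma> - 1)"
    using genharm_le_large_exponent[of "2 * \<gamma>" p] assms by simp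
  also have "\<dots> = \<gamma> / (\<gamma> - 1/2)"
    using assms by (simp add: field_simps)
  also have "\<dots> \<le> 1 / (\<gamma> - 1/2)"
    using assms by (intro divide_right_mono) auto
  finally have "sqrt (genharm p (2 * \<gamma>)) \<le> 1 / sqrt (\<gamma> - 1/2)"
    by (metis real_sqrt_le_mono real_sqrt_divide real_sqrt_one)
  with bound have "frob_norm n (Bmat \<gamma> p n) / sqrt (real n)
      \<le> 3 * (1 / sqrt (\<gamma> - 1/2) + (1 - \<gamma>) * sqrt (real n) * real p powr (-\<gamma>))"
    by simp
  also have "\<dots> \<le> 6 * (1 / sqrt (\<gamma> - 1/2) + (1 - \<gamma>) * sqrt (real n) * real p powr (-\<gamma>))"
    using assms by (intro mult_right_mono) auto
  finally show ?thesis .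
qed

lemma frob_norm_Bmat_div_sqrt_le_piecewise:
  assumes "0 < \<gamma>" "\<gamma> < 1" "2 \<le> p" "p \<le> n"
  shows "frob_norm n (Bmat \<gamma> p n) / sqrt (real n)
           \<le> (if \<gamma> < 1/2 then 6 * real p powr (-\<gamma>) * (sqrt (real p / (1/2 - \<gamma>)) + sqrt (real n))
               else if \<gamma> = 1/2 then 6 * (sqrt (ln (real p)) + sqrt (real n / real p))
               else 6 * (1 / sqrt (\<gamma> - 1/2) + (1 - \<gamma>) * sqrt (real n) * real p powr (-\<gamma>)))"
proof (cases rule: linorder_cases[of \<gamma> "1/2"])
  case less
  then show ?thesis
    using assms frob_norm_Bmat_div_sqrt_le_below_half[of \<gamma> p n] by simp
next
  case equal
  show ?thesis
    unfolding equal using assms frob_norm_Bmat_div_sqrt_le_at_half[of p n] by simp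
next
  case greater
  then show ?thesis
    using assms frob_norm_Bmat_div_sqrt_le_above_half[of \<gamma> p n] by simp
qed

theorem mainTheorem7:
  shows "(\<forall>(\<gamma>::real) (n::nat) (p::nat). 0 < \<gamma> \<and> \<gamma> < 1 \<and> 2 \<le> p \<and> p \<le> n \<longrightarrow>
            (frob_norm n (Bmat \<gamma> p n))\<^sup>2
              \<le> real n + real n / (Gamma (1 - \<gamma>))\<^sup>2 * genharm (p - 1) (2 * \<gamma>)
                + real ((n - p) * (n - p + 1)) / (2 * (Gamma (1 - \<gamma>))\<^sup>2)
                  * (1 / (real (p - 1) powr (2 * \<gamma>))))
       \<and> (\<exists>K::real. \<forall>(\<gamma>::real) (n::nat) (p::nat). 0 < \<gamma> \<and> \<gamma> < 1 \<and> 2 \<le> p \<and> p \<le> n \<longrightarrow>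
            frob_norm n (Bmat \<gamma> p n) / sqrt (real n)
              \<le> (if \<gamma> < 1/2 then
                   K * real p powr (-\<gamma>) * (sqrt (real p / (1/2 - \<gamma>)) + sqrt (real n))
                 else if \<gamma> = 1/2 then
                   K * (sqrt (ln (real p)) + sqrt (real n / real p))
                 else
                   K * (1 / sqrt (\<gamma> - 1/2) + (1 - \<gamma>) * sqrt (real n) * real p powr (-\<gamma>))))"
  using frob_norm_Bmat_sq_le_Gamma frob_norm_Bmat_div_sqrt_le_piecewise by blast

end
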